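(* Let $I$ be a squarefree monomial ideal of $Q=\Bbbk[x_1,\ldots,x_n]$ and $\mathbb{T}$ the Taylor resolution of $Q/I$ with Gemeda's dg algebra structure. For a variable $x_k$, let $\mathbb{I}_k$ be the subcomplex of $\mathbb{T}$ spanned by the elements $e_V$ and $\partial(e_V)$ for all $V\subseteq G(I)$ such that $V$ contains a monomial divisible by $x_k$. Then $\mathbb{I}_k$ is a dg ideal of $\mathbb{T}$. Moreover, for any set of variables $x_{k_1},\ldots,x_{k_\ell}$, the subcomplex $\mathbb{I}$ spanned by all $e_V$ and $\partial(e_V)$ with $e_V\in\mathbb{I}_{k_r}$ for some $r$ is a dg ideal of $\mathbb{T}$.
   Context: $G(I)$ is the set of minimal monomial generators of $I$ with a fixed total order $<$; $m_U=\mathrm{lcm}(U)$. The Taylor resolution $\mathbb{T}$ has basis $e_U$ ($U\subseteq G(I)$) in degree $|U|$, differential $\partial(e_U)=\sum_{u\in U}(-1)^{|\{v\in U:v<u\}|}\frac{m_U}{m_{U\setminus\{u\}}}e_{U\setminus\{u\}}$, and Gemeda product $e_Ve_W=(-1)^{|\{(v,w)\in V\times W:v>w\}|}\frac{m_Vm_W}{m_{V\cup W}}e_{V\cup W}$ if $V\cap W=\emptyset$, $0$ otherwise. A subcomplex $\mathbb{J}$ of a dg algebra $\mathbb{F}$ is a dg ideal if $\mathbb{F}\mathbb{J}\subseteq\mathbb{J}$. *)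

theory Defs
  imports "HOL-Library.Poly_Mapping"
begin

(* Monomials of Q = k[x_1,...,x_n] are exponent vectors  nat \<Rightarrow>\<^sub>0 nat
   (variable x_v has index v); polynomials are  (nat \<Rightarrow>\<^sub>0 nat) \<Rightarrow>\<^sub>0 'k
   with the convolution product of HOL-Library.Poly_Mapping.
   The minimal generators G(I) = {g 0, ..., g (m-1)} are indexed by {..<m};
   the fixed total order on G(I) is the order of the indices.
   Subsets U \<subseteq> G(I) are represented by index sets U \<subseteq> {..<m}. *)

type_synonym mon = "nat \<Rightarrow>\<^sub>0 nat"
type_synonym 'k qpoly = "mon \<Rightarrow>\<^sub>0 'k"

definition qmon :: "mon \<Rightarrow> 'k::comm_ring_1 qpoly" where
  "qmon a = Poly_Mapping.single a 1"

definition mlcm :: "(nat \<Rightarrow> mon) \<Rightarrow> nat set \<Rightarrow> mon" where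
  "mlcm g U = Abs_poly_mapping (\<lambda>v. Max (insert 0 ((\<lambda>i. Poly_Mapping.lookup (g i) v) ` U)))"

definition mdvd :: "mon \<Rightarrow> mon \<Rightarrow> bool" where
  "mdvd a b \<longleftrightarrow> (\<forall>v. Poly_Mapping.lookup a v \<le> Poly_Mapping.lookup b v)"

definition sqfree_min_gens :: "nat \<Rightarrow> nat \<Rightarrow> (nat \<Rightarrow> mon) \<Rightarrow> bool" where
  "sqfree_min_gens n m g \<longleftrightarrow>
     (\<forall>i<m. Poly_Mapping.keys (g i) \<subseteq> {1..n} \<and> (\<forall>v. Poly_Mapping.lookup (g i) v \<le> 1)) \<and>
     (\<forall>i<m. \<forall>j<m. i \<noteq> j \<longrightarrow> \<not> mdvd (g i) (g j))"

(* Elements of the Taylor resolution T: Q-linear combinations of basis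
   elements e_U, U \<subseteq> {..<m}, represented by coefficient functions. *)
type_synonym 'k telem = "nat set \<Rightarrow> 'k qpoly"

definition taylor :: "nat \<Rightarrow> 'k::comm_ring_1 telem set" where
  "taylor m = {f. \<forall>U. \<not> U \<subseteq> {..<m} \<longrightarrow> f U = 0}"

definition tbasis :: "nat set \<Rightarrow> 'k::comm_ring_1 telem" where
  "tbasis U = (\<lambda>W. if W = U then 1 else 0)"

(* coefficient of e_W in \<partial>(e_U) *)
definition dcoef :: "(nat \<Rightarrow> mon) \<Rightarrow> nat set \<Rightarrow> nat set \<Rightarrow> 'k::comm_ring_1 qpoly" where
  "dcoef g U W =
     (if \<exists>u\<in>U. W = U - {u}
      then (let u = (THE u. u \<in> U \<and> W = U - {u}) in
            (-1) ^ card {v\<in>U. v < u} * qmon (mlcm g U - mlcm g W))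
      else 0)"

definition tdiff :: "nat \<Rightarrow> (nat \<Rightarrow> mon) \<Rightarrow> 'k::comm_ring_1 telem \<Rightarrow> 'k telem" where
  "tdiff m g f = (\<lambda>W. \<Sum>U\<in>Pow {..<m}. f U * dcoef g U W)"

(* coefficient of e_W in the Gemeda product e_V e_V' *)
definition pcoef :: "(nat \<Rightarrow> mon) \<Rightarrow> nat set \<Rightarrow> nat set \<Rightarrow> nat set \<Rightarrow> 'k::comm_ring_1 qpoly" where
  "pcoef g V V' W =
     (if V \<inter> V' = {} \<and> W = V \<union> V'
      then (-1) ^ card {(v, w). v \<in> V \<and> w \<in> V' \<and> v > w}
           * qmon (mlcm g V + mlcm g V' - mlcm g (V \<union> V'))
      else 0)"

definition tmult :: "nat \<Rightarrow> (nat \<Rightarrow> mon) \<Rightarrow> 'k::comm_ring_1 telem \<Rightarrow> 'k telem \<Rightarrow> 'k telem" where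
  "tmult m g f h = (\<lambda>W. \<Sum>V\<in>Pow {..<m}. \<Sum>V'\<in>Pow {..<m}. f V * h V' * pcoef g V V' W)"

definition qspan :: "'k::comm_ring_1 telem set \<Rightarrow> 'k telem set" where
  "qspan S = {f. \<exists>F c. finite F \<and> F \<subseteq> S \<and> f = (\<lambda>W. \<Sum>s\<in>F. c s * s W)}"

definition dg_ideal :: "nat \<Rightarrow> (nat \<Rightarrow> mon) \<Rightarrow> 'k::comm_ring_1 telem set \<Rightarrow> bool" where
  "dg_ideal m g J \<longleftrightarrow>
     J \<subseteq> taylor m \<and>
     (\<lambda>W. 0) \<in> J \<and> (\<forall>a\<in>J. \<forall>b\<in>J. (\<lambda>W. a W + b W) \<in> J) \<and> (\<forall>q. \<forall>a\<in>J. (\<lambda>W. q * a W) \<in> J) \<and>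
     (\<forall>a\<in>J. tdiff m g a \<in> J) \<and>
     (\<forall>a\<in>taylor m. \<forall>b\<in>J. tmult m g a b \<in> J)"

definition hits :: "(nat \<Rightarrow> mon) \<Rightarrow> nat \<Rightarrow> nat set \<Rightarrow> bool" where
  "hits g k V \<longleftrightarrow> (\<exists>i\<in>V. Poly_Mapping.lookup (g i) k \<ge> 1)"

definition Ik :: "nat \<Rightarrow> (nat \<Rightarrow> mon) \<Rightarrow> nat \<Rightarrow> 'k::comm_ring_1 telem set" where
  "Ik m g k = qspan ({tbasis V | V. V \<subseteq> {..<m} \<and> hits g k V}
                    \<union> {tdiff m g (tbasis V) | V. V \<subseteq> {..<m} \<and> hits g k V})"

end

theory Submission
  imports Defs
begin

(* Write G_k for the generators divisible by x_k.  The span of the e_V and d(e_V) with V meeting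
   G_k is closed under d because d(d(e_V)) = 0.  For closure under multiplication it suffices to
   multiply generators by basis elements e_U.  Now e_U e_V is a multiple of e_(U u V), and so is
   every term e_U e_(V - {v}) of e_U d(e_V) for which V - {v} still meets G_k.  In the remaining
   term v is the only element of V in G_k and v is not in U; then e_U e_(V - {v}) is a monomial
   multiple of the e_(U u V - {v})-term of d(e_(U u V)), and that term is d(e_(U u V)) minus
   multiples of basis elements e_(U u V - {w}), w <> v, all of which contain v.
   For several variables, e_V lies in I_r exactly when V meets G_r (otherwise x_r divides the
   e_V-coefficient of every element of I_r), so the second span is of the same kind, with G_k
   replaced by the union of the G_r. *)

lemma lookup_mlcm:
  assumes "finite U"
  shows "Poly_Mapping.lookup (mlcm g U) x = Max (insert 0 ((\<lambda>i. Poly_Mapping.lookup (g i) x) ` U))"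
proof -
  have "{v. Max (insert 0 ((\<lambda>i. Poly_Mapping.lookup (g i) v) ` U)) \<noteq> 0} \<subseteq> (\<Union>i\<in>U. Poly_Mapping.keys (g i))"
  proof
    fix v assume "v \<in> {v. Max (insert 0 ((\<lambda>i. Poly_Mapping.lookup (g i) v) ` U)) \<noteq> 0}"
    moreover have "Max (insert 0 ((\<lambda>i. Poly_Mapping.lookup (g i) v) ` U)) \<in> insert 0 ((\<lambda>i. Poly_Mapping.lookup (g i) v) ` U)"
      using assms by (intro Max_in) auto
    ultimately show "v \<in> (\<Union>i\<in>U. Poly_Mapping.keys (g i))" by (auto simp: in_keys_iff)
  qed
  then have "finite {v. Max (insert 0 ((\<lambda>i. Poly_Mapping.lookup (g i) v) ` U)) \<noteq> 0}"
    by (rule finite_subset) (use assms in auto)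
  then show ?thesis unfolding mlcm_def by simp
qed

lemma lookup_mlcm_union:
  assumes "finite A" "finite B"
  shows "Poly_Mapping.lookup (mlcm g (A \<union> B)) x
       = max (Poly_Mapping.lookup (mlcm g A) x) (Poly_Mapping.lookup (mlcm g B) x)"
proof -
  have "insert 0 ((\<lambda>i. Poly_Mapping.lookup (g i) x) ` (A \<union> B))
      = insert 0 ((\<lambda>i. Poly_Mapping.lookup (g i) x) ` A) \<union> insert 0 ((\<lambda>i. Poly_Mapping.lookup (g i) x) ` B)"
    by auto
  then show ?thesis
    using assms Max_Un[of "insert 0 ((\<lambda>i. Poly_Mapping.lookup (g i) x) ` A)" "insert 0 ((\<lambda>i. Poly_Mapping.lookup (g i) x) ` B)"]
    by (simp add: lookup_mlcm)
qed

lemma lookup_mlcm_mono: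
  assumes "finite B" "A \<subseteq> B"
  shows "Poly_Mapping.lookup (mlcm g A) x \<le> Poly_Mapping.lookup (mlcm g B) x"
proof -
  have "finite A" using assms finite_subset by auto
  show ?thesis unfolding lookup_mlcm[OF \<open>finite A\<close>] lookup_mlcm[OF assms(1)]
    by (rule Max_mono) (use assms in auto)
qed

lemma mlcm_diff_telescope:
  assumes "finite C" "A \<subseteq> B" "B \<subseteq> C"
  shows "(mlcm g C - mlcm g B) + (mlcm g B - mlcm g A) = mlcm g C - mlcm g A"
proof (rule poly_mapping_eqI)
  fix x
  have "Poly_Mapping.lookup (mlcm g A) x \<le> Poly_Mapping.lookup (mlcm g B) x"
    using assms finite_subset by (intro lookup_mlcm_mono) auto
  moreover have "Poly_Mapping.lookup (mlcm g B) x \<le> Poly_Mapping.lookup (mlcm g C) x"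
    using assms by (intro lookup_mlcm_mono)
  ultimately show "Poly_Mapping.lookup ((mlcm g C - mlcm g B) + (mlcm g B - mlcm g A)) x
      = Poly_Mapping.lookup (mlcm g C - mlcm g A) x"
    by (simp add: lookup_add lookup_minus)
qed

text \<open>Both sides equal \<open>m\<^sub>U + m\<^sub>V - m\<^bsub>U \<union> (V - {v})\<^esub>\<close>: none of the truncated
  subtractions actually truncates.\<close>

lemma mlcm_remove_union:
  assumes "finite U" "finite V" "v \<in> V"
  shows "(mlcm g V - mlcm g (V - {v})) + (mlcm g U + mlcm g (V - {v}) - mlcm g (U \<union> (V - {v})))
       = (mlcm g U + mlcm g V - mlcm g (U \<union> V)) + (mlcm g (U \<union> V) - mlcm g (U \<union> (V - {v})))"
proof (rule poly_mapping_eqI)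
  fix x
  define a where "a = Poly_Mapping.lookup (mlcm g U) x"
  define b where "b = Poly_Mapping.lookup (mlcm g (V - {v})) x"
  define c where "c = Poly_Mapping.lookup (mlcm g V) x"
  have "b \<le> c" unfolding b_def c_def using assms by (intro lookup_mlcm_mono) auto
  moreover have "Poly_Mapping.lookup (mlcm g (U \<union> (V - {v}))) x = max a b"
    unfolding a_def b_def using assms by (intro lookup_mlcm_union) auto
  moreover have "Poly_Mapping.lookup (mlcm g (U \<union> V)) x = max a c"
    unfolding a_def c_def using assms by (intro lookup_mlcm_union) auto
  ultimately show "Poly_Mapping.lookup ((mlcm g V - mlcm g (V - {v})) + (mlcm g U + mlcm g (V - {v}) - mlcm g (U \<union> (V - {v})))) x
     = Poly_Mapping.lookup ((mlcm g U + mlcm g V - mlcm g (U \<union> V)) + (mlcm g (U \<union> V) - mlcm g (U \<union> (V - {v})))) x"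
    unfolding lookup_add lookup_minus a_def[symmetric] b_def[symmetric] c_def[symmetric]
    by (auto simp: max_def)
qed

lemma qmon_mult: "qmon a * qmon b = (qmon (a + b) :: 'k::comm_ring_1 qpoly)"
  unfolding qmon_def by (simp add: mult_single)

lemma qspan_base: "s \<in> S \<Longrightarrow> s \<in> qspan S"
  unfolding qspan_def by (rule CollectI, rule exI[of _ "{s}"], rule exI[of _ "\<lambda>_. 1"]) auto

lemma qspan_zero: "(\<lambda>W. 0) \<in> qspan S"
  unfolding qspan_def by (rule CollectI, rule exI[of _ "{}"]) auto

lemma qspan_smult: "a \<in> qspan S \<Longrightarrow> (\<lambda>W. q * a W) \<in> qspan S"
proof -
  assume "a \<in> qspan S"
  then obtain F c where F: "finite F" "F \<subseteq> S" "a = (\<lambda>W. \<Sum>s\<in>F. c s * s W)"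
    unfolding qspan_def by blast
  show ?thesis unfolding qspan_def
    by (rule CollectI, rule exI[of _ F], rule exI[of _ "\<lambda>s. q * c s"])
       (simp add: F sum_distrib_left mult.assoc)
qed

lemma qspan_add: "a \<in> qspan S \<Longrightarrow> b \<in> qspan S \<Longrightarrow> (\<lambda>W. a W + b W) \<in> qspan S"
proof -
  assume "a \<in> qspan S" "b \<in> qspan S"
  then obtain F c G d where F: "finite F" "F \<subseteq> S" "a = (\<lambda>W. \<Sum>s\<in>F. c s * s W)"
    and G: "finite G" "G \<subseteq> S" "b = (\<lambda>W. \<Sum>s\<in>G. d s * s W)"
    unfolding qspan_def by blast
  define e where "e s = (if s \<in> F then c s else 0) + (if s \<in> G then d s else 0)" for s
  have "(\<Sum>s\<in>F \<union> G. e s * s W) = a W + b W" for W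
  proof -
    have "(\<Sum>s\<in>F \<union> G. e s * s W)
        = (\<Sum>s\<in>F \<union> G. if s \<in> F then c s * s W else 0) + (\<Sum>s\<in>F \<union> G. if s \<in> G then d s * s W else 0)"
      unfolding sum.distrib[symmetric] by (rule sum.cong) (simp_all add: e_def distrib_right)
    also have "\<dots> = a W + b W"
      using F G by (simp add: sum.If_cases Int_absorb1 Int_absorb2)
    finally show ?thesis .
  qed
  then have "(\<lambda>W. a W + b W) = (\<lambda>W. \<Sum>s\<in>F \<union> G. e s * s W)" by simp
  then show ?thesis unfolding qspan_def using F G by blast
qed

lemma qspan_sum:
  assumes "finite A" "\<And>i. i \<in> A \<Longrightarrow> f i \<in> qspan S"
  shows "(\<lambda>W. \<Sum>i\<in>A. c i * f i W) \<in> qspan S"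
  using assms
proof (induction A rule: finite_induct)
  case empty
  then show ?case using qspan_zero by simp
next
  case (insert x A)
  have "(\<lambda>W. c x * f x W + (\<Sum>i\<in>A. c i * f i W)) \<in> qspan S"
    using insert by (intro qspan_add qspan_smult) auto
  then show ?case using insert by simp
qed

lemma qspan_diff: "a \<in> qspan S \<Longrightarrow> b \<in> qspan S \<Longrightarrow> (\<lambda>W. a W - b W) \<in> qspan S"
  using qspan_add[of a S "\<lambda>W. (-1) * b W"] qspan_smult[of b S "-1"] by simp

lemma tbasis_mem_taylor: "V \<subseteq> {..<m} \<Longrightarrow> tbasis V \<in> taylor m"
  unfolding taylor_def tbasis_def by auto

lemma tdiff_mem_taylor: "tdiff m g (f :: 'k::comm_ring_1 telem) \<in> taylor m"
proof -
  have "(dcoef g U W :: 'k qpoly) = 0" if "U \<subseteq> {..<m}" "\<not> W \<subseteq> {..<m}" for U W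
    using that unfolding dcoef_def by auto
  then show ?thesis unfolding taylor_def tdiff_def by (auto intro: sum.neutral)
qed

lemma qspan_subset_taylor:
  assumes "S \<subseteq> taylor m"
  shows "qspan S \<subseteq> taylor m"
proof
  fix f assume "f \<in> qspan S"
  then obtain F c where F: "F \<subseteq> S" "f = (\<lambda>W. \<Sum>s\<in>F. c s * s W)"
    unfolding qspan_def by blast
  have "(\<Sum>s\<in>F. c s * s U) = 0" if "\<not> U \<subseteq> {..<m}" for U
  proof (intro sum.neutral ballI)
    fix s assume "s \<in> F"
    then have "s U = 0" using that F(1) assms unfolding taylor_def by blast
    then show "c s * s U = 0" by simp
  qed
  then show "f \<in> taylor m" unfolding taylor_def F(2) by simp
qed

lemma dcoef_remove:
  assumes "v \<in> V"
  shows "dcoef g V (V - {v}) = (-1) ^ card {x\<in>V. x < v} * (qmon (mlcm g V - mlcm g (V - {v})) :: 'k::comm_ring_1 qpoly)"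
proof -
  have "(THE u. u \<in> V \<and> V - {v} = V - {u}) = v"
    using assms by (rule_tac the_equality) auto
  then show ?thesis using assms unfolding dcoef_def by auto
qed

lemma dcoef_eq_sum:
  assumes "finite V"
  shows "dcoef g V W = (\<Sum>v\<in>V. if W = V - {v} then dcoef g V (V - {v}) else (0 :: 'k::comm_ring_1 qpoly))"
proof (cases "\<exists>u\<in>V. W = V - {u}")
  case True
  then obtain u where u: "u \<in> V" "W = V - {u}" by auto
  have "(\<Sum>v\<in>V. if W = V - {v} then dcoef g V (V - {v}) else (0 :: 'k qpoly))
      = (\<Sum>v\<in>V. if v = u then dcoef g V (V - {v}) else 0)"
    using u by (intro sum.cong) auto
  then show ?thesis using u assms by simp
next
  case False
  then show ?thesis unfolding dcoef_def by auto
qed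

lemma tdiff_tbasis:
  assumes "V \<subseteq> {..<m}"
  shows "tdiff m g (tbasis V) = (\<lambda>W. dcoef g V W :: 'k::comm_ring_1 qpoly)"
proof
  fix W
  have "tdiff m g (tbasis V :: 'k telem) W = (\<Sum>U\<in>Pow {..<m}. if U = V then dcoef g U W else (0::'k qpoly))"
    unfolding tdiff_def tbasis_def by (intro sum.cong) auto
  then show "tdiff m g (tbasis V :: 'k telem) W = dcoef g V W" using assms by simp
qed

lemma tdiff_tbasis_expand:
  assumes "V \<subseteq> {..<m}"
  shows "tdiff m g (tbasis V) = (\<lambda>W. \<Sum>v\<in>V. dcoef g V (V - {v}) * tbasis (V - {v}) W :: 'k::comm_ring_1 qpoly)"
proof
  fix W
  have "finite V" using assms finite_subset by auto
  then have "dcoef g V W = (\<Sum>v\<in>V. dcoef g V (V - {v}) * tbasis (V - {v}) W :: 'k qpoly)"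
    by (subst dcoef_eq_sum) (auto intro!: sum.cong simp: tbasis_def)
  then show "tdiff m g (tbasis V) W = (\<Sum>v\<in>V. dcoef g V (V - {v}) * tbasis (V - {v}) W :: 'k qpoly)"
    using assms by (simp add: tdiff_tbasis)
qed

lemma tdiff_sum:
  "tdiff m g (\<lambda>W. \<Sum>s\<in>F. c s * f s W) W = (\<Sum>s\<in>F. c s * tdiff m g (f s) W :: 'k::comm_ring_1 qpoly)"
  unfolding tdiff_def
  by (simp add: sum_distrib_left sum_distrib_right mult_ac sum.swap[of _ F])

lemma dcoef_dcoef_remove:
  assumes "finite V" "v \<in> V" "w \<in> V" "v \<noteq> w"
  shows "dcoef g V (V - {v}) * dcoef g (V - {v}) (V - {v} - {w})
    = (-1) ^ (card {x\<in>V. x < v} + card {x\<in>V - {v}. x < w})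
      * (qmon (mlcm g V - mlcm g (V - {v} - {w})) :: 'k::comm_ring_1 qpoly)"
proof -
  have w: "w \<in> V - {v}" using assms by auto
  have "(mlcm g V - mlcm g (V - {v})) + (mlcm g (V - {v}) - mlcm g (V - {v} - {w}))
      = mlcm g V - mlcm g (V - {v} - {w})"
    using assms by (intro mlcm_diff_telescope) auto
  then have q: "qmon (mlcm g V - mlcm g (V - {v})) * qmon (mlcm g (V - {v}) - mlcm g (V - {v} - {w}))
      = (qmon (mlcm g V - mlcm g (V - {v} - {w})) :: 'k qpoly)"
    by (simp only: qmon_mult)
  show ?thesis
    unfolding dcoef_remove[OF assms(2)] dcoef_remove[OF w] power_add
    by (simp only: mult_ac q[symmetric])
qed

lemma dcoef_dcoef_antisym:
  assumes "finite V" "v \<in> V" "w \<in> V" "v \<noteq> w"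
  shows "dcoef g V (V - {v}) * dcoef g (V - {v}) (V - {v} - {w})
    = - (dcoef g V (V - {w}) * dcoef g (V - {w}) (V - {w} - {v}) :: 'k::comm_ring_1 qpoly)"
proof -
  have swap: "dcoef g V (V - {v}) * dcoef g (V - {v}) (V - {v} - {w})
    = - (dcoef g V (V - {w}) * dcoef g (V - {w}) (V - {w} - {v}) :: 'k qpoly)"
    if vw: "v \<in> V" "w \<in> V" "v < w" for v w
  proof -
    have "{x\<in>V. x < w} = insert v {x\<in>V - {v}. x < w}" using vw by auto
    then have card_w: "card {x\<in>V. x < w} = Suc (card {x\<in>V - {v}. x < w})"
      using assms(1) by (simp add: card_insert_disjoint)
    have below_v: "{x\<in>V - {w}. x < v} = {x\<in>V. x < v}" using vw by auto
    have swap_remove: "V - {w} - {v} = V - {v} - {w}" by auto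
    have "v \<noteq> w" "w \<noteq> v" using vw(3) by auto
    then show ?thesis
      unfolding dcoef_dcoef_remove[OF assms(1) vw(1,2) \<open>v \<noteq> w\<close>]
        dcoef_dcoef_remove[OF assms(1) vw(2,1) \<open>w \<noteq> v\<close>]
      unfolding card_w below_v swap_remove by (simp add: add.commute)
  qed
  show ?thesis
  proof (cases "v < w")
    case True
    then show ?thesis using swap assms by blast
  next
    case False
    then have "w < v" using assms(4) by simp
    then show ?thesis using swap[of w v] assms by simp
  qed
qed

lemma sum_sum_antisym_eq_zero:
  fixes F :: "'a \<Rightarrow> 'a \<Rightarrow> 'b::ab_group_add"
  assumes "finite V" "\<And>v w. v \<in> V \<Longrightarrow> w \<in> V \<Longrightarrow> v \<noteq> w \<Longrightarrow> F v w = - F w v"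
  shows "(\<Sum>v\<in>V. \<Sum>w\<in>V - {v}. F v w) = 0"
  using assms
proof (induction V rule: finite_induct)
  case empty
  show ?case by simp
next
  case (insert a V)
  have antisym: "\<And>v w. v \<in> insert a V \<Longrightarrow> w \<in> insert a V \<Longrightarrow> v \<noteq> w \<Longrightarrow> F v w = - F w v"
    by (rule insert.prems)
  have IH: "(\<Sum>v\<in>V. \<Sum>w\<in>V - {v}. F v w) = 0" by (rule insert.IH) (rule antisym, auto)
  have "(\<Sum>v\<in>insert a V. \<Sum>w\<in>insert a V - {v}. F v w)
      = (\<Sum>w\<in>insert a V - {a}. F a w) + (\<Sum>v\<in>V. \<Sum>w\<in>insert a V - {v}. F v w)"
    using insert.hyps by (simp add: sum.insert)
  also have "(\<Sum>w\<in>insert a V - {a}. F a w) = (\<Sum>w\<in>V. F a w)" using insert.hyps by simp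
  also have "(\<Sum>v\<in>V. \<Sum>w\<in>insert a V - {v}. F v w) = (\<Sum>v\<in>V. F v a + (\<Sum>w\<in>V - {v}. F v w))"
  proof (intro sum.cong refl)
    fix v assume "v \<in> V"
    then have "insert a V - {v} = insert a (V - {v})" "a \<notin> V - {v}" using insert.hyps by auto
    then show "(\<Sum>w\<in>insert a V - {v}. F v w) = F v a + (\<Sum>w\<in>V - {v}. F v w)"
      using insert.hyps by simp
  qed
  also have "\<dots> = (\<Sum>v\<in>V. F v a)" using IH by (simp add: sum.distrib)
  also have "(\<Sum>w\<in>V. F a w) + (\<Sum>v\<in>V. F v a) = (\<Sum>v\<in>V. F a v + F v a)" by (simp add: sum.distrib)
  also have "\<dots> = 0"
  proof (rule sum.neutral, rule ballI)
    fix v assume "v \<in> V"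
    then have "a \<noteq> v" using insert.hyps by auto
    then have "F a v = - F v a" using \<open>v \<in> V\<close> by (intro antisym) auto
    then show "F a v + F v a = 0" by simp
  qed
  finally show ?case .
qed

lemma tdiff_tdiff_tbasis:
  assumes "V \<subseteq> {..<m}"
  shows "tdiff m g (tdiff m g (tbasis V)) = (\<lambda>W. 0 :: 'k::comm_ring_1 qpoly)"
proof
  fix W
  have fin: "finite V" using assms finite_subset by auto
  define F where "F v w = (if W = V - {v} - {w}
    then dcoef g V (V - {v}) * dcoef g (V - {v}) (V - {v} - {w}) else (0 :: 'k qpoly))" for v w
  have "tdiff m g (tdiff m g (tbasis V :: 'k telem)) W
      = (\<Sum>v\<in>V. dcoef g V (V - {v}) * dcoef g (V - {v}) W)"
    unfolding tdiff_tbasis_expand[OF assms] tdiff_sum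
  proof (intro sum.cong refl)
    fix v assume "v \<in> V"
    have "V - {v} \<subseteq> {..<m}" using assms by auto
    then show "dcoef g V (V - {v}) * tdiff m g (tbasis (V - {v})) W = dcoef g V (V - {v}) * dcoef g (V - {v}) W"
      by (simp add: tdiff_tbasis)
  qed
  also have "\<dots> = (\<Sum>v\<in>V. \<Sum>w\<in>V - {v}. F v w)"
  proof (intro sum.cong refl)
    fix v assume "v \<in> V"
    have "dcoef g V (V - {v}) * dcoef g (V - {v}) W = dcoef g V (V - {v})
        * (\<Sum>w\<in>V - {v}. if W = V - {v} - {w} then dcoef g (V - {v}) (V - {v} - {w}) else 0)"
      using fin by (simp add: dcoef_eq_sum[of "V - {v}"])
    also have "\<dots> = (\<Sum>w\<in>V - {v}. F v w)"
      unfolding F_def sum_distrib_left by (intro sum.cong) auto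
    finally show "dcoef g V (V - {v}) * dcoef g (V - {v}) W = (\<Sum>w\<in>V - {v}. F v w)" .
  qed
  also have "\<dots> = 0"
  proof (rule sum_sum_antisym_eq_zero[OF fin])
    fix v w assume vw: "v \<in> V" "w \<in> V" "v \<noteq> w"
    have "V - {w} - {v} = V - {v} - {w}" by auto
    then show "F v w = - F w v"
      unfolding F_def dcoef_dcoef_antisym[OF fin vw] by simp
  qed
  finally show "tdiff m g (tdiff m g (tbasis V :: 'k telem)) W = 0" .
qed

lemma tmult_tbasis_left:
  assumes "U \<subseteq> {..<m}"
  shows "tmult m g (tbasis U) b W = (\<Sum>V\<in>Pow {..<m}. b V * pcoef g U V W :: 'k::comm_ring_1 qpoly)"
proof -
  have "tmult m g (tbasis U) b W
      = (\<Sum>V'\<in>Pow {..<m}. if V' = U then (\<Sum>V\<in>Pow {..<m}. b V * pcoef g V' V W) else 0)"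
    unfolding tmult_def tbasis_def by (intro sum.cong) auto
  then show ?thesis using assms by simp
qed

lemma tmult_expand_left:
  "tmult m g a b W = (\<Sum>U\<in>Pow {..<m}. a U * tmult m g (tbasis U) b W :: 'k::comm_ring_1 qpoly)"
proof -
  have "tmult m g a b W = (\<Sum>U\<in>Pow {..<m}. a U * (\<Sum>V\<in>Pow {..<m}. b V * pcoef g U V W))"
    unfolding tmult_def by (simp add: sum_distrib_left mult.assoc)
  then show ?thesis by (auto simp: tmult_tbasis_left intro!: sum.cong)
qed

lemma tmult_sum_right:
  "tmult m g a (\<lambda>W. \<Sum>s\<in>F. c s * f s W) W = (\<Sum>s\<in>F. c s * tmult m g a (f s) W :: 'k::comm_ring_1 qpoly)"
  unfolding tmult_def
  by (simp add: sum_distrib_left sum_distrib_right mult_ac sum.swap[of _ F])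

lemma tmult_tbasis_tbasis:
  assumes "U \<subseteq> {..<m}" "V \<subseteq> {..<m}"
  shows "tmult m g (tbasis U) (tbasis V) = (\<lambda>W. pcoef g U V (U \<union> V) * tbasis (U \<union> V) W :: 'k::comm_ring_1 qpoly)"
proof
  fix W
  have "tmult m g (tbasis U) (tbasis V) W = (\<Sum>V'\<in>Pow {..<m}. if V' = V then pcoef g U V' W else (0::'k qpoly))"
    unfolding tmult_tbasis_left[OF assms(1)] by (intro sum.cong) (auto simp: tbasis_def)
  also have "\<dots> = pcoef g U V (U \<union> V) * tbasis (U \<union> V) W"
    using assms by (simp add: pcoef_def tbasis_def)
  finally show "tmult m g (tbasis U) (tbasis V) W = (pcoef g U V (U \<union> V) * tbasis (U \<union> V) W :: 'k qpoly)" .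
qed

lemma qspan_linear_image:
  assumes linear: "\<And>F c. L (\<lambda>W. \<Sum>s\<in>F. c s * s W) = (\<lambda>W. \<Sum>s\<in>F. c s * L s W)"
    and gens: "\<And>s. s \<in> S \<Longrightarrow> L s \<in> qspan T"
    and a: "a \<in> qspan S"
  shows "L a \<in> qspan T"
proof -
  obtain F c where F: "finite F" "F \<subseteq> S" "a = (\<lambda>W. \<Sum>s\<in>F. c s * s W)"
    using a unfolding qspan_def by blast
  have "(\<lambda>W. \<Sum>s\<in>F. c s * L s W) \<in> qspan T"
    using F gens by (intro qspan_sum) auto
  then show ?thesis unfolding F(3) linear .
qed

lemma dcoef_pcoef_factor:
  assumes "finite U" "finite V" "v \<in> V" "v \<notin> U"
  shows "\<exists>q. dcoef g V (V - {v}) * pcoef g U (V - {v}) (U \<union> (V - {v}))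
           = q * (dcoef g (U \<union> V) (U \<union> V - {v}) :: 'k::comm_ring_1 qpoly)"
proof (cases "U \<inter> (V - {v}) = {}")
  case False
  then show ?thesis by (intro exI[of _ 0]) (simp add: pcoef_def)
next
  case True
  define a where "a = card {x\<in>V. x < v}"
  define b where "b = card {(x, w). x \<in> U \<and> w \<in> V - {v} \<and> x > w}"
  define c where "c = card {x\<in>U \<union> V. x < v}"
  have remove_v: "U \<union> V - {v} = U \<union> (V - {v})" using assms(4) by auto
  have "v \<in> U \<union> V" using assms(3) by simp
  from dcoef_remove[OF this, of g] have dcoef_union: "dcoef g (U \<union> V) (U \<union> V - {v})
      = (-1) ^ c * (qmon (mlcm g (U \<union> V) - mlcm g (U \<union> (V - {v}))) :: 'k qpoly)"
    unfolding c_def remove_v .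
  have pcoef_U: "pcoef g U (V - {v}) (U \<union> (V - {v}))
      = (-1) ^ b * (qmon (mlcm g U + mlcm g (V - {v}) - mlcm g (U \<union> (V - {v}))) :: 'k qpoly)"
    using True unfolding pcoef_def b_def by simp
  have sign: "(-1) ^ c * (-1) ^ c = (1 :: 'k qpoly)"
    by (simp flip: power_add)
  show ?thesis
  proof (intro exI)
    show "dcoef g V (V - {v}) * pcoef g U (V - {v}) (U \<union> (V - {v}))
        = ((-1) ^ (a + b) * (-1) ^ c * qmon (mlcm g U + mlcm g V - mlcm g (U \<union> V)))
          * (dcoef g (U \<union> V) (U \<union> V - {v}) :: 'k qpoly)"
      unfolding dcoef_remove[OF assms(3)] pcoef_U dcoef_union a_def[symmetric] power_add
      using sign mlcm_remove_union[OF assms(1-3), of g]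
      by (simp add: mult_ac qmon_mult)
  qed
qed

definition gens_meeting :: "nat \<Rightarrow> (nat \<Rightarrow> mon) \<Rightarrow> (nat \<Rightarrow> bool) \<Rightarrow> 'k::comm_ring_1 telem set" where
  "gens_meeting m g p = {tbasis V | V. V \<subseteq> {..<m} \<and> (\<exists>i\<in>V. p i)}
                      \<union> {tdiff m g (tbasis V) | V. V \<subseteq> {..<m} \<and> (\<exists>i\<in>V. p i)}"

lemma tbasis_mem_gens_meeting:
  "V \<subseteq> {..<m} \<Longrightarrow> i \<in> V \<Longrightarrow> p i \<Longrightarrow> tbasis V \<in> qspan (gens_meeting m g p)"
  unfolding gens_meeting_def by (rule qspan_base) blast

lemma tdiff_tbasis_mem_gens_meeting:
  "V \<subseteq> {..<m} \<Longrightarrow> i \<in> V \<Longrightarrow> p i \<Longrightarrow> tdiff m g (tbasis V) \<in> qspan (gens_meeting m g p)"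
  unfolding gens_meeting_def by (rule qspan_base) blast

lemma tdiff_mem_gens_meeting:
  assumes "s \<in> gens_meeting m g p"
  shows "tdiff m g s \<in> qspan (gens_meeting m g p :: 'k::comm_ring_1 telem set)"
proof -
  obtain V i where V: "V \<subseteq> {..<m}" "i \<in> V" "p i" and "s = tbasis V \<or> s = tdiff m g (tbasis V)"
    using assms unfolding gens_meeting_def by blast
  then consider "s = tbasis V" | "tdiff m g s = (\<lambda>W. 0)"
    using tdiff_tdiff_tbasis by blast
  then show ?thesis
    using tdiff_tbasis_mem_gens_meeting[where p = p, OF V] qspan_zero by cases auto
qed

lemma tdiff_remove_term_mem_gens_meeting:
  assumes "T \<subseteq> {..<m}" "t \<in> T" "p t"
  shows "(\<lambda>W. dcoef g T (T - {t}) * tbasis (T - {t}) W) \<in> qspan (gens_meeting m g p :: 'k::comm_ring_1 telem set)"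
proof -
  have fin: "finite T" using assms finite_subset by auto
  have "(\<lambda>W. \<Sum>w\<in>T - {t}. dcoef g T (T - {w}) * tbasis (T - {w}) W) \<in> qspan (gens_meeting m g p :: 'k telem set)"
    using fin assms by (intro qspan_sum tbasis_mem_gens_meeting[where i = t]) auto
  with tdiff_tbasis_mem_gens_meeting[where p = p, OF assms]
  have "(\<lambda>W. tdiff m g (tbasis T) W - (\<Sum>w\<in>T - {t}. dcoef g T (T - {w}) * tbasis (T - {w}) W))
      \<in> qspan (gens_meeting m g p :: 'k telem set)"
    by (rule qspan_diff)
  then show ?thesis
    unfolding tdiff_tbasis_expand[OF assms(1)] using fin assms(2) by (simp add: sum.remove)
qed

lemma tmult_tbasis_mem_gens_meeting:
  assumes "U \<subseteq> {..<m}" "V \<subseteq> {..<m}" "i \<in> V" "p i"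
  shows "tmult m g (tbasis U) (tbasis V) \<in> qspan (gens_meeting m g p :: 'k::comm_ring_1 telem set)"
  unfolding tmult_tbasis_tbasis[OF assms(1,2)] using assms
  by (intro qspan_smult tbasis_mem_gens_meeting[where i = i]) auto

lemma tmult_tbasis_remove_term_mem_gens_meeting:
  assumes U: "U \<subseteq> {..<m}" and V: "V \<subseteq> {..<m}" "i \<in> V" "p i" and v: "v \<in> V"
  shows "(\<lambda>W. dcoef g V (V - {v}) * tmult m g (tbasis U) (tbasis (V - {v})) W)
    \<in> qspan (gens_meeting m g p :: 'k::comm_ring_1 telem set)"
proof -
  have "V - {v} \<subseteq> {..<m}" using V by auto
  then have expand: "(\<lambda>W. dcoef g V (V - {v}) * tmult m g (tbasis U) (tbasis (V - {v})) W)
      = (\<lambda>W. (dcoef g V (V - {v}) * pcoef g U (V - {v}) (U \<union> (V - {v}))) * tbasis (U \<union> (V - {v})) W :: 'k qpoly)"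
    by (simp add: tmult_tbasis_tbasis[OF U] mult.assoc)
  show ?thesis
  proof (cases "\<exists>j\<in>U \<union> (V - {v}). p j")
    case True
    then obtain j where "j \<in> U \<union> (V - {v})" "p j" by blast
    then show ?thesis unfolding expand
      using U V by (intro qspan_smult tbasis_mem_gens_meeting[where i = j]) auto
  next
    case False
    then have "v = i" "v \<notin> U" using V by auto
    have "finite U" "finite V" using U V finite_subset by auto
    then obtain q where q: "dcoef g V (V - {v}) * pcoef g U (V - {v}) (U \<union> (V - {v}))
        = q * (dcoef g (U \<union> V) (U \<union> V - {v}) :: 'k qpoly)"
      using dcoef_pcoef_factor[OF _ _ v \<open>v \<notin> U\<close>] by blast
    have "U \<union> V - {v} = U \<union> (V - {v})" using \<open>v \<notin> U\<close> by auto
    moreover have "(\<lambda>W. q * (dcoef g (U \<union> V) (U \<union> V - {v}) * tbasis (U \<union> V - {v}) W))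
        \<in> qspan (gens_meeting m g p :: 'k telem set)"
      using U V v \<open>v = i\<close> by (intro qspan_smult tdiff_remove_term_mem_gens_meeting) auto
    ultimately show ?thesis unfolding expand q by (simp add: mult.assoc)
  qed
qed

lemma tmult_tbasis_tdiff_mem_gens_meeting:
  assumes U: "U \<subseteq> {..<m}" and V: "V \<subseteq> {..<m}" "i \<in> V" "p i"
  shows "tmult m g (tbasis U) (tdiff m g (tbasis V)) \<in> qspan (gens_meeting m g p :: 'k::comm_ring_1 telem set)"
proof -
  have "finite V" using V finite_subset by auto
  then have "(\<lambda>W. \<Sum>v\<in>V. 1 * (dcoef g V (V - {v}) * tmult m g (tbasis U) (tbasis (V - {v})) W))
      \<in> qspan (gens_meeting m g p :: 'k telem set)"
    using tmult_tbasis_remove_term_mem_gens_meeting[where p = p, OF U V] by (intro qspan_sum) auto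
  then show ?thesis unfolding tdiff_tbasis_expand[OF V(1)] tmult_sum_right by simp
qed

lemma tmult_tbasis_gen_mem_gens_meeting:
  assumes "U \<subseteq> {..<m}" "s \<in> gens_meeting m g p"
  shows "tmult m g (tbasis U) s \<in> qspan (gens_meeting m g p :: 'k::comm_ring_1 telem set)"
proof -
  obtain V i where V: "V \<subseteq> {..<m}" "i \<in> V" "p i" and "s = tbasis V \<or> s = tdiff m g (tbasis V)"
    using assms(2) unfolding gens_meeting_def by blast
  then show ?thesis
    using tmult_tbasis_mem_gens_meeting[where p = p, OF assms(1) V]
      tmult_tbasis_tdiff_mem_gens_meeting[where p = p, OF assms(1) V] by blast
qed

lemma tmult_mem_gens_meeting:
  assumes "b \<in> qspan (gens_meeting m g p)"
  shows "tmult m g a b \<in> qspan (gens_meeting m g p :: 'k::comm_ring_1 telem set)"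
proof -
  have "tmult m g (tbasis U) b \<in> qspan (gens_meeting m g p :: 'k telem set)" if "U \<subseteq> {..<m}" for U
  proof (rule qspan_linear_image[OF _ _ assms])
    show "tmult m g (tbasis U) (\<lambda>W. \<Sum>s\<in>F. c s * s W) = (\<lambda>W. \<Sum>s\<in>F. c s * tmult m g (tbasis U) s W)"
      for F c by (rule ext) (rule tmult_sum_right)
  qed (rule tmult_tbasis_gen_mem_gens_meeting[OF that])
  then have "(\<lambda>W. \<Sum>U\<in>Pow {..<m}. a U * tmult m g (tbasis U) b W) \<in> qspan (gens_meeting m g p :: 'k telem set)"
    by (intro qspan_sum) auto
  then show ?thesis unfolding tmult_expand_left[symmetric] .
qed

lemma dg_ideal_qspan_gens_meeting: "dg_ideal m g (qspan (gens_meeting m g p) :: 'k::comm_ring_1 telem set)"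
  unfolding dg_ideal_def
proof (intro conjI ballI allI)
  show "qspan (gens_meeting m g p) \<subseteq> (taylor m :: 'k telem set)"
    unfolding gens_meeting_def using tbasis_mem_taylor tdiff_mem_taylor
    by (intro qspan_subset_taylor) blast
  show "tdiff m g a \<in> qspan (gens_meeting m g p)" if "a \<in> qspan (gens_meeting m g p)" for a :: "'k telem"
  proof (rule qspan_linear_image[OF _ _ that])
    show "tdiff m g (\<lambda>W. \<Sum>s\<in>F. c s * s W) = (\<lambda>W. \<Sum>s\<in>F. c s * tdiff m g s W)"
      for F c by (rule ext) (rule tdiff_sum)
  qed (rule tdiff_mem_gens_meeting)
qed (auto intro: qspan_zero qspan_add qspan_smult tmult_mem_gens_meeting)

definition in_var_ideal :: "nat \<Rightarrow> 'k::comm_ring_1 qpoly \<Rightarrow> bool" where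
  "in_var_ideal r q \<longleftrightarrow> (\<forall>a\<in>Poly_Mapping.keys q. 1 \<le> Poly_Mapping.lookup a r)"

lemma in_var_ideal_mult: "in_var_ideal r y \<Longrightarrow> in_var_ideal r (x * y)"
  unfolding in_var_ideal_def using keys_mult[of x y] by (force simp: lookup_add)

lemma in_var_ideal_sum:
  assumes "\<And>s. s \<in> F \<Longrightarrow> in_var_ideal r (f s)"
  shows "in_var_ideal r (\<Sum>s\<in>F. f s)"
  using assms
proof (induction F rule: infinite_finite_induct)
  case (insert s F)
  then show ?case
    using keys_add[of "f s" "\<Sum>s\<in>F. f s"] unfolding in_var_ideal_def by (simp add: subset_iff) blast
qed (simp_all add: in_var_ideal_def)

lemma qspan_coeff_in_var_ideal:
  assumes "f \<in> qspan S" "\<And>s. s \<in> S \<Longrightarrow> in_var_ideal r (s V)"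
  shows "in_var_ideal r (f V)"
proof -
  obtain F c where "F \<subseteq> S" "f = (\<lambda>W. \<Sum>s\<in>F. c s * s W)"
    using assms(1) unfolding qspan_def by blast
  then show ?thesis using assms(2) by (auto intro!: in_var_ideal_sum in_var_ideal_mult)
qed

text \<open>The coefficient of \<open>e\<^sub>V\<close> in \<open>\<partial>(e\<^bsub>V \<union> {u}\<^esub>)\<close> is \<open>\<plusminus>m\<^bsub>V \<union> {u}\<^esub>/m\<^sub>V\<close>, and \<open>x\<^sub>r\<close>
  divides some generator in \<open>V \<union> {u}\<close> but none in \<open>V\<close>.\<close>

lemma Ik_coeff_in_var_ideal:
  assumes "f \<in> Ik m g r" "\<not> hits g r V"
  shows "in_var_ideal r ((f :: 'k::comm_ring_1 telem) V)"
  using assms(1) unfolding Ik_def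
proof (rule qspan_coeff_in_var_ideal, elim UnE CollectE exE conjE)
  fix s V' assume s: "s = tbasis V'" and "hits g r V'"
  then have "V \<noteq> V'" using assms(2) by auto
  then show "in_var_ideal r (s V)" unfolding s tbasis_def in_var_ideal_def by simp
next
  fix s V' assume s: "s = tdiff m g (tbasis V')" and V': "V' \<subseteq> {..<m}" "hits g r V'"
  show "in_var_ideal r (s V)"
  proof (cases "\<exists>u\<in>V'. V = V' - {u}")
    case False
    then show ?thesis unfolding s tdiff_tbasis[OF V'(1)] dcoef_def in_var_ideal_def by simp
  next
    case True
    then obtain u where u: "u \<in> V'" "V = V' - {u}" by blast
    have "finite V'" "finite V" using V'(1) u(2) finite_subset by auto
    obtain i where i: "i \<in> V'" "1 \<le> Poly_Mapping.lookup (g i) r"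
      using V'(2) unfolding hits_def by blast
    have "Poly_Mapping.lookup (g i) r \<le> Poly_Mapping.lookup (mlcm g V') r"
      unfolding lookup_mlcm[OF \<open>finite V'\<close>] using \<open>finite V'\<close> i by (intro Max_ge) auto
    moreover have "Poly_Mapping.lookup (mlcm g V) r = 0"
      unfolding lookup_mlcm[OF \<open>finite V\<close>] using assms(2) \<open>finite V\<close> unfolding hits_def
      by (intro antisym Max.boundedI) auto
    ultimately have "1 \<le> Poly_Mapping.lookup (mlcm g V' - mlcm g V) r"
      using i by (simp add: lookup_minus)
    then show ?thesis
      unfolding s tdiff_tbasis[OF V'(1)] u(2) dcoef_remove[OF u(1)]
      by (intro in_var_ideal_mult) (simp add: in_var_ideal_def qmon_def flip: u(2))
  qed
qed

lemma tbasis_mem_Ik_iff: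
  assumes "V \<subseteq> {..<m}"
  shows "(tbasis V :: 'k::comm_ring_1 telem) \<in> Ik m g r \<longleftrightarrow> hits g r V"
proof
  assume "(tbasis V :: 'k telem) \<in> Ik m g r"
  then have "hits g r V \<or> in_var_ideal r ((tbasis V :: 'k telem) V)"
    using Ik_coeff_in_var_ideal by blast
  then show "hits g r V" unfolding in_var_ideal_def tbasis_def by simp
next
  assume "hits g r V"
  then show "(tbasis V :: 'k telem) \<in> Ik m g r"
    unfolding Ik_def using assms by (intro qspan_base) blast
qed

theorem mainTheorem12:
  fixes n m :: nat and g :: "nat \<Rightarrow> mon" and k :: nat and K :: "nat set"
  assumes gens: "sqfree_min_gens n m g"
    and inj: "inj_on g {..<m}"
    and K: "finite K" "K \<subseteq> {1..n}"
    and k: "k \<in> {1..n}"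
  shows "dg_ideal m g (Ik m g k :: 'k::field telem set)
    \<and> dg_ideal m g (qspan
          ({tbasis V | V. V \<subseteq> {..<m} \<and> (\<exists>r\<in>K. (tbasis V :: 'k telem) \<in> Ik m g r)}
           \<union> {tdiff m g (tbasis V) | V. V \<subseteq> {..<m} \<and> (\<exists>r\<in>K. (tbasis V :: 'k telem) \<in> Ik m g r)})
          :: 'k telem set)"
proof -
  have "Ik m g k = (qspan (gens_meeting m g (\<lambda>i. 1 \<le> Poly_Mapping.lookup (g i) k)) :: 'k telem set)"
    unfolding Ik_def gens_meeting_def hits_def ..
  moreover have "V \<subseteq> {..<m} \<and> (\<exists>r\<in>K. (tbasis V :: 'k telem) \<in> Ik m g r)
    \<longleftrightarrow> V \<subseteq> {..<m} \<and> (\<exists>i\<in>V. \<exists>r\<in>K. 1 \<le> Poly_Mapping.lookup (g i) r)" for V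
    using tbasis_mem_Ik_iff[of V m g] unfolding hits_def by blast
  ultimately show ?thesis
    using dg_ideal_qspan_gens_meeting[of m g "\<lambda>i. \<exists>r\<in>K. 1 \<le> Poly_Mapping.lookup (g i) r"]
      dg_ideal_qspan_gens_meeting[of m g "\<lambda>i. 1 \<le> Poly_Mapping.lookup (g i) k"]
    unfolding gens_meeting_def by simp
qed

end
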